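(* Let $G \in \{\mathrm{U}, \mathrm{Sp}, \mathrm{O}, \mathrm{SO(even)}, \mathrm{SO(odd)}\}$ and $\Delta>0$. Let $F:\mathbb{C}\to\mathbb{C}$ be an entire function. Then $F\in\mathcal{H}_{\pi\Delta}$ if and only if $F\in\mathcal{H}_{G,\pi\Delta}$. Moreover, there exist positive constants $C^+$ and $C^-$, possibly depending on $\Delta$, such that \[ C^- \|F\|_{L^2(\mathbb{R})} \le \|F\|_{L^2(\mathbb{R}, W_G)} \le C^+ \|F\|_{L^2(\mathbb{R})} \] for all $F\in\mathcal{H}_{\pi\Delta}$.
   Context: $\mathcal{H}_{\pi\Delta}$ (Paley–Wiener space) is the space of entire functions of exponential type at most $\pi\Delta$ whose restriction to $\mathbb{R}$ is in $L^2(\mathbb{R})$. Densities: $W_{\mathrm U}=1$; $W_{\mathrm{Sp}}(x)=1-\frac{\sin 2\pi x}{2\pi x}$; $W_{\mathrm O}(x)=1+\frac12\boldsymbol{\delta}_0(x)$; $W_{\mathrm{SO(even)}}(x)=1+\frac{\sin 2\pi x}{2\pi x}$; $W_{\mathrm{SO(odd)}}(x)=1-\frac{\sin 2\pi x}{2\pi x}+\boldsymbol{\delta}_0(x)$, with $\boldsymbol{\delta}_0$ the Dirac delta at $0$, and $\|F\|^2_{L^2(\mathbb{R},W_G)}=\int_{\mathbb{R}}|F(x)|^2W_G(x)\,dx$ (the delta contributing the corresponding multiple of $|F(0)|^2$). $\mathcal{H}_{G,\pi\Delta}$ is the space of entire functions $F$ of exponential type at most $\pi\Delta$ with $\|F\|_{L^2(\mathbb{R},W_G)}<\infty$.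 *)

theory Defs
  imports "HOL-Analysis.Analysis"
begin

datatype symgroup = GU | GSp | GO | GSOeven | GSOodd

definition exp_type_le :: "(complex \<Rightarrow> complex) \<Rightarrow> real \<Rightarrow> bool" where
  "exp_type_le F tau \<longleftrightarrow>
     (\<forall>\<epsilon>>0. \<exists>C. \<forall>z. norm (F z) \<le> C * exp ((tau + \<epsilon>) * norm z))"

definition sinc2 :: "real \<Rightarrow> real" where
  "sinc2 x = (if x = 0 then 1 else sin (2 * pi * x) / (2 * pi * x))"

text \<open>Absolutely continuous part of the density W_G.\<close>
fun Wac :: "symgroup \<Rightarrow> real \<Rightarrow> real" where
  "Wac GU x = 1"
| "Wac GSp x = 1 - sinc2 x"
| "Wac GO x = 1"
| "Wac GSOeven x = 1 + sinc2 x"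
| "Wac GSOodd x = 1 - sinc2 x"

text \<open>Coefficient of the Dirac delta at 0 in W_G.\<close>
fun Wdelta :: "symgroup \<Rightarrow> real" where
  "Wdelta GU = 0"
| "Wdelta GSp = 0"
| "Wdelta GO = 1/2"
| "Wdelta GSOeven = 0"
| "Wdelta GSOodd = 1"

definition L2norm :: "(complex \<Rightarrow> complex) \<Rightarrow> real" where
  "L2norm F = sqrt (integral\<^sup>L lborel (\<lambda>x. (cmod (F (of_real x)))\<^sup>2))"

definition WL2norm :: "symgroup \<Rightarrow> (complex \<Rightarrow> complex) \<Rightarrow> real" where
  "WL2norm G F = sqrt (integral\<^sup>L lborel (\<lambda>x. (cmod (F (of_real x)))\<^sup>2 * Wac G x)
                       + Wdelta G * (cmod (F 0))\<^sup>2)"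

definition PW :: "real \<Rightarrow> (complex \<Rightarrow> complex) set" where
  "PW tau = {F. F holomorphic_on UNIV \<and> exp_type_le F tau \<and>
       integrable lborel (\<lambda>x. (cmod (F (of_real x)))\<^sup>2)}"

text \<open>H_{G,tau}: entire, exponential type at most tau, finite weighted L2 norm
  (the delta part is always finite).\<close>
definition PWG :: "symgroup \<Rightarrow> real \<Rightarrow> (complex \<Rightarrow> complex) set" where
  "PWG G tau = {F. F holomorphic_on UNIV \<and> exp_type_le F tau \<and>
       (\<integral>\<^sup>+ x. ennreal ((cmod (F (of_real x)))\<^sup>2 * Wac G x) \<partial>lborel) < \<infinity>}"

end

(* By the Phragmen-Lindelof principle, an entire function of exponential type T that is bounded
   by M on the real line is bounded by M e^(T |Im z|). Applied to z -> A (z + a) - A z, where A is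
   a primitive of F and 0 < a <= 2, whose values on the real line are controlled by the L^2 norm N
   of F, Cauchy's estimate bounds the increments F (x + a) - F x, and averaging over [x, x + 2]
   gives the pointwise bound |F x|^2 <= K N. Since W_G is at most 2 and stays above a positive
   constant outside any neighbourhood of 0, the weighted norm lies between a multiple of N and
   (2 + K) N: an interval of length 1/(2K) around 0 carries at most half of N, and the Dirac mass
   contributes at most K N. *)

theory Submission
  imports Defs "HOL-Complex_Analysis.Complex_Analysis" "HOL-Real_Asymp.Real_Asymp"
begin

lemma le_of_forall_pos_le_mult_exp:
  fixes a B X :: real
  assumes "\<And>d. d > 0 \<Longrightarrow> a \<le> B * exp (d * X)"
  shows "a \<le> B"
proof -
  have "((\<lambda>d. B * exp (d * X)) \<longlongrightarrow> B * exp (0 * X)) (at_right 0)"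
    by (intro tendsto_intros)
  moreover have "eventually (\<lambda>d. a \<le> B * exp (d * X)) (at_right (0::real))"
    using eventually_at_right_less[of "0::real"] by (rule eventually_mono) (use assms in auto)
  ultimately show ?thesis by (simp add: tendsto_lowerbound)
qed

lemma maximum_modulus_closed_superset:
  fixes h :: "complex \<Rightarrow> complex"
  assumes "open S" "bounded S" "closed T" "S \<subseteq> T" "h holomorphic_on T"
    and boundary: "\<And>z. z \<in> T \<Longrightarrow> z \<notin> S \<Longrightarrow> norm (h z) \<le> B"
    and "z \<in> T"
  shows "norm (h z) \<le> B"
proof (cases "z \<in> S")
  case True
  have clS: "closure S \<subseteq> T" using assms(3,4) by (rule closure_minimal[rotated])
  show ?thesis
  proof (rule maximum_modulus_frontier[of h S])
    show "h holomorphic_on interior S"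
      using assms(1,4,5) by (simp add: interior_open holomorphic_on_subset)
    show "continuous_on (closure S) h"
      using holomorphic_on_imp_continuous_on[OF assms(5)] clS by (rule continuous_on_subset)
    fix w assume "w \<in> frontier S"
    then show "norm (h w) \<le> B"
      using boundary clS assms(1) unfolding frontier_def interior_open[OF assms(1)] by blast
  qed (use assms True in auto)
qed (use assms in auto)

lemma quarter_disc_maximum_modulus:
  fixes h :: "complex \<Rightarrow> complex"
  assumes "h holomorphic_on {u. 0 \<le> Re u \<and> 0 \<le> Im u \<and> norm u \<le> R}"
    and "\<And>u. 0 \<le> Re u \<Longrightarrow> 0 \<le> Im u \<Longrightarrow> norm u \<le> R \<Longrightarrow> Re u = 0 \<or> Im u = 0 \<or> norm u = R
           \<Longrightarrow> norm (h u) \<le> B"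
    and "0 \<le> Re z" "0 \<le> Im z" "norm z \<le> R"
  shows "norm (h z) \<le> B"
proof (rule maximum_modulus_closed_superset[OF _ _ _ _ assms(1)])
  show "open {u. 0 < Re u \<and> 0 < Im u \<and> norm u < R}"
    by (intro open_Collect_conj open_Collect_less continuous_intros)
  show "bounded {u. 0 < Re u \<and> 0 < Im u \<and> norm u < R}"
    by (rule bounded_subset[OF bounded_ball[of 0 R]]) auto
  show "closed {u. 0 \<le> Re u \<and> 0 \<le> Im u \<and> norm u \<le> R}"
    by (intro closed_Collect_conj closed_Collect_le continuous_intros)
qed (use assms(2-) in auto)

lemma half_disc_maximum_modulus:
  fixes h :: "complex \<Rightarrow> complex"
  assumes "h holomorphic_on {u. 0 \<le> Im u \<and> norm u \<le> R}"
    and "\<And>u. 0 \<le> Im u \<Longrightarrow> norm u \<le> R \<Longrightarrow> Im u = 0 \<or> norm u = R \<Longrightarrow> norm (h u) \<le> B"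
    and "0 \<le> Im z" "norm z \<le> R"
  shows "norm (h z) \<le> B"
proof (rule maximum_modulus_closed_superset[OF _ _ _ _ assms(1)])
  show "open {u. 0 < Im u \<and> norm u < R}"
    by (intro open_Collect_conj open_Collect_less continuous_intros)
  show "bounded {u. 0 < Im u \<and> norm u < R}"
    by (rule bounded_subset[OF bounded_ball[of 0 R]]) auto
  show "closed {u. 0 \<le> Im u \<and> norm u \<le> R}"
    by (intro closed_Collect_conj closed_Collect_le continuous_intros)
qed (use assms(2-) in auto)

text \<open>On the sector |arg w| \<le> pi/4 the power w^(3/2) stays in |arg| \<le> 3 pi/8, so its real part is
  comparable to |w|^(3/2).\<close>
lemma csqrt_right_sector_bounds:
  assumes "\<bar>Im w\<bar> \<le> Re w"
  shows "(Re (csqrt w))^3 / 4 \<le> Re (w * csqrt w)" "norm w \<le> 2 * (Re (csqrt w))^2"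
proof -
  define p q where "p = Re (csqrt w)" and "q = Im (csqrt w)"
  have w: "w = (csqrt w)^2" by simp
  have p0: "p \<ge> 0" unfolding p_def by (rule Re_csqrt)
  have Rew: "Re w = p^2 - q^2" and Imw: "Im w = 2*p*q"
    unfolding p_def q_def by (metis Re_power2 Im_power2 w)+
  have sector: "2*p*\<bar>q\<bar> \<le> p^2 - q^2" using assms Rew Imw p0 by (simp add: abs_mult)
  have "2*\<bar>q\<bar> \<le> p"
  proof (rule ccontr)
    assume "\<not> 2*\<bar>q\<bar> \<le> p"
    then have "p*p \<le> p*(2*\<bar>q\<bar>)" using p0 by (intro mult_left_mono) auto
    then have "q^2 \<le> 0" using sector by (simp add: power2_eq_square algebra_simps)
    then have "q = 0" by simp
    then show False using \<open>\<not> 2*\<bar>q\<bar> \<le> p\<close> p0 by simp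
  qed
  then have "(2*\<bar>q\<bar>)^2 \<le> p^2" by (intro power_mono) auto
  then have "q^2 \<le> p^2/4" by (simp add: power_mult_distrib)
  then have "3*p*q^2 \<le> 3*p*(p^2/4)" using p0 by (intro mult_left_mono) auto
  moreover have "Re (w * csqrt w) = p^3 - 3*p*q^2"
    unfolding p_def q_def by (subst w; simp add: power2_eq_square power3_eq_cube algebra_simps)
  moreover have "p^3 = p * p^2" by (simp add: power3_eq_cube power2_eq_square)
  ultimately show "(Re (csqrt w))^3 / 4 \<le> Re (w * csqrt w)" unfolding p_def[symmetric] by linarith
  have "norm w = p^2 + q^2"
    unfolding p_def q_def by (metis w norm_power cmod_power2)
  then show "norm w \<le> 2 * (Re (csqrt w))^2"
    using \<open>q^2 \<le> p^2/4\<close> zero_le_power2[of p] unfolding p_def[symmetric] by linarith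
qed

text \<open>The map u \<mapsto> (1 - i) u + 1 sends the closed first quadrant into the sector |arg| \<le> pi/4;
  quadrant_damping_exponent u is the principal power 3/2 of the image of u.\<close>
definition quadrant_damping_exponent :: "complex \<Rightarrow> complex" where
  "quadrant_damping_exponent u = ((1 - \<i>) * u + 1) * csqrt ((1 - \<i>) * u + 1)"

lemma Re_quadrant_damping_exponent:
  fixes z :: complex
  assumes "0 \<le> Re z" "0 \<le> Im z"
  shows "0 \<le> Re (quadrant_damping_exponent z)"
    and "1 \<le> norm z \<Longrightarrow> sqrt ((norm z - 1) / 2) ^ 3 / 4 \<le> Re (quadrant_damping_exponent z)"
proof -
  define w where "w = (1 - \<i>) * z + 1"
  have sector: "\<bar>Im w\<bar> \<le> Re w" using assms by (simp add: w_def)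
  have w: "quadrant_damping_exponent z = w * csqrt w" unfolding quadrant_damping_exponent_def w_def ..
  have "0 \<le> Re (csqrt w) ^ 3 / 4" by (intro divide_nonneg_pos zero_le_power Re_csqrt) auto
  then show "0 \<le> Re (quadrant_damping_exponent z)"
    unfolding w using csqrt_right_sector_bounds(1)[OF sector] by linarith
  show "sqrt ((norm z - 1) / 2) ^ 3 / 4 \<le> Re (quadrant_damping_exponent z)" if "1 \<le> norm z"
  proof -
    have "norm (1 - \<i>) = sqrt 2" by (simp add: cmod_def)
    then have "norm z \<le> norm ((1 - \<i>) * z)" by (simp add: norm_mult mult_le_cancel_right1)
    then have "norm z - 1 \<le> norm w" using norm_diff_ineq[of "(1 - \<i>) * z" 1] by (simp add: w_def)
    then have "(norm z - 1) / 2 \<le> Re (csqrt w) ^ 2" using csqrt_right_sector_bounds(2)[OF sector] by simp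
    then have "sqrt ((norm z - 1) / 2) \<le> Re (csqrt w)" by (intro real_le_lsqrt Re_csqrt)
    then have "sqrt ((norm z - 1) / 2) ^ 3 \<le> Re (csqrt w) ^ 3" by (intro power_mono) (use that in auto)
    then show ?thesis unfolding w using csqrt_right_sector_bounds(1)[OF sector] by linarith
  qed
qed

lemma phragmen_lindelof_quadrant_perturbed:
  fixes g :: "complex \<Rightarrow> complex"
  assumes hol: "g holomorphic_on UNIV"
    and growth: "\<And>u. norm (g u) \<le> C * exp (b * norm u)"
    and real_axis: "\<And>x. x \<ge> 0 \<Longrightarrow> norm (g (of_real x)) \<le> B"
    and imag_axis: "\<And>y. y \<ge> 0 \<Longrightarrow> norm (g (\<i> * of_real y)) \<le> B"
    and B: "B > 0" and d: "d > 0" and z: "0 \<le> Re z" "0 \<le> Im z"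
  shows "norm (g z) \<le> B * exp (d * Re (quadrant_damping_exponent z))"
proof -
  define X where "X u = Re (quadrant_damping_exponent u)" for u
  define h where "h u = g u * exp (- (of_real d * quadrant_damping_exponent u))" for u
  have norm_h: "norm (h u) = norm (g u) * exp (- d * X u)" for u
    by (simp add: h_def norm_mult norm_exp_eq_Re X_def)
  have C: "C \<ge> 0" using order_trans[OF norm_ge_zero growth[of 0]] by simp
  \<comment> \<open>the damping factor decays like exp (- d |u|^(3/2)), which beats exp (b |u|) on large arcs\<close>
  have "((\<lambda>R. C * exp (b*R - d/4 * sqrt ((R-1)/2)^3)) \<longlongrightarrow> 0) at_top"
    using d by real_asymp
  then have "eventually (\<lambda>R. C * exp (b*R - d/4 * sqrt ((R-1)/2)^3) < B \<and> R \<ge> max 1 (norm z)) at_top"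
    using B by (intro eventually_conj order_tendstoD eventually_ge_at_top)
  then obtain R where R: "C * exp (b*R - d/4 * sqrt ((R-1)/2)^3) < B" "1 \<le> R" "norm z \<le> R"
    by (auto simp: eventually_at_top_linorder)
  have "norm (h z) \<le> B"
  proof (rule quarter_disc_maximum_modulus[of h R])
    have "h holomorphic_on {u. 0 < Re u + Im u + 1}"
      unfolding h_def quadrant_damping_exponent_def
      by (intro holomorphic_intros holomorphic_on_subset[OF hol])
        (auto simp: complex_nonpos_Reals_iff)
    then show "h holomorphic_on {u. 0 \<le> Re u \<and> 0 \<le> Im u \<and> norm u \<le> R}"
      by (rule holomorphic_on_subset) auto
    fix u assume u: "0 \<le> Re u" "0 \<le> Im u" and "norm u \<le> R" "Re u = 0 \<or> Im u = 0 \<or> norm u = R"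
    have "exp (- d * X u) \<le> 1"
      using d Re_quadrant_damping_exponent(1)[OF u] by (simp add: X_def mult_nonneg_nonneg)
    then have h_le_g: "norm (h u) \<le> norm (g u)" unfolding norm_h by (simp add: mult_left_le)
    consider "u = of_real (Re u)" | "u = \<i> * of_real (Im u)" | "norm u = R"
      using \<open>Re u = 0 \<or> Im u = 0 \<or> norm u = R\<close> by (auto simp: complex_eq_iff)
    then show "norm (h u) \<le> B"
    proof cases
      case 1 then show ?thesis using h_le_g real_axis[OF u(1)] by (metis order.trans)
    next
      case 2 then show ?thesis using h_le_g imag_axis[OF u(2)] by (metis order.trans)
    next
      case 3
      have "exp (- d * X u) \<le> exp (- d/4 * sqrt ((R-1)/2)^3)"
        using d Re_quadrant_damping_exponent(2)[OF u] R(2) 3 by (simp add: X_def mult_left_mono)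
      moreover have "norm (g u) \<le> C * exp (b * R)" using growth[of u] 3 by simp
      ultimately have "norm (h u) \<le> C * exp (b * R) * exp (- d/4 * sqrt ((R-1)/2)^3)"
        unfolding norm_h using C by (intro mult_mono) auto
      also have "\<dots> = C * exp (b*R - d/4 * sqrt ((R-1)/2)^3)" by (simp add: mult.assoc flip: exp_add)
      finally show ?thesis using R(1) by linarith
    qed
  qed (use z R in auto)
  then have "norm (g z) * exp (- d * X z) * exp (d * X z) \<le> B * exp (d * X z)"
    unfolding norm_h by (intro mult_right_mono) auto
  then show ?thesis by (simp add: X_def mult.assoc flip: exp_add)
qed

lemma phragmen_lindelof_quadrant:
  fixes g :: "complex \<Rightarrow> complex"
  assumes "g holomorphic_on UNIV"
    and "\<And>u. norm (g u) \<le> C * exp (b * norm u)"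
    and "\<And>x. x \<ge> 0 \<Longrightarrow> norm (g (of_real x)) \<le> B"
    and "\<And>y. y \<ge> 0 \<Longrightarrow> norm (g (\<i> * of_real y)) \<le> B"
    and "B > 0" "0 \<le> Re z" "0 \<le> Im z"
  shows "norm (g z) \<le> B"
  using phragmen_lindelof_quadrant_perturbed[OF assms(1-5) _ assms(6,7)]
  by (rule le_of_forall_pos_le_mult_exp)

lemma phragmen_lindelof_half_plane_perturbed:
  fixes g :: "complex \<Rightarrow> complex"
  assumes hol: "g holomorphic_on UNIV"
    and bounded: "\<And>u. 0 \<le> Im u \<Longrightarrow> norm (g u) \<le> B"
    and real_axis: "\<And>x. norm (g (of_real x)) \<le> M"
    and M: "M > 0" and d: "d > 0" and z: "0 \<le> Im z"
  shows "norm (g z) \<le> M * (1 + d * norm z)"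
proof -
  define D where "D u = 1 - \<i> * of_real d * u" for u
  define h where "h u = g u / D u" for u
  have Re_D: "Re (D u) = 1 + d * Im u" for u by (simp add: D_def)
  have D_ge_1: "1 \<le> norm (D u)" if "0 \<le> Im u" for u
    using complex_Re_le_cmod[of "D u"] Re_D[of u] that d by (smt (verit) mult_nonneg_nonneg)
  define R where "R = max (norm z) ((B / M + 1) / d)"
  have dR: "B / M + 1 \<le> d * R" using d unfolding R_def by (simp add: max_def field_simps)
  have "norm (h z) \<le> M"
  proof (rule half_disc_maximum_modulus[of h R])
    have "D u \<noteq> 0" if "0 < 1 + d * Im u" for u using Re_D[of u] that by auto
    then have "h holomorphic_on {u. 0 < 1 + d * Im u}"
      unfolding h_def D_def by (intro holomorphic_intros holomorphic_on_subset[OF hol]) auto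
    then show "h holomorphic_on {u. 0 \<le> Im u \<and> norm u \<le> R}"
      by (rule holomorphic_on_subset) (use d in \<open>auto intro!: add_pos_nonneg\<close>)
    fix u assume u: "0 \<le> Im u" and "norm u \<le> R" "Im u = 0 \<or> norm u = R"
    have "norm (g u) \<le> M * norm (D u)"
    proof (cases "Im u = 0")
      case True
      have "norm (g u) \<le> M" using real_axis[of "Re u"] of_real_Re[of u] True by (simp add: complex_is_Real_iff)
      moreover have "M \<le> M * norm (D u)" using D_ge_1[OF u] M by simp
      ultimately show ?thesis by linarith
    next
      case False
      have "norm (\<i> * of_real d * u) - norm (1::complex) \<le> norm (D u)"
        using norm_triangle_ineq3[of "\<i> * of_real d * u" 1] by (simp add: D_def norm_minus_commute)
      then have "B / M \<le> norm (D u)" using False \<open>Im u = 0 \<or> norm u = R\<close> d dR by (simp add: norm_mult)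
      then show ?thesis using bounded[OF u] M by (simp add: pos_divide_le_eq mult.commute)
    qed
    then show "norm (h u) \<le> M" using D_ge_1[OF u] M by (simp add: h_def norm_divide divide_le_eq)
  qed (use z in \<open>auto simp: R_def\<close>)
  moreover have "norm (D z) \<le> 1 + d * norm z"
    using norm_triangle_ineq4[of 1 "\<i> * of_real d * z"] d by (simp add: D_def norm_mult)
  moreover have "D z \<noteq> 0" using D_ge_1[OF z] by auto
  ultimately show ?thesis
    using M by (simp add: h_def norm_divide divide_le_eq) (meson less_imp_le mult_left_mono order_trans)
qed

lemma phragmen_lindelof_half_plane:
  fixes g :: "complex \<Rightarrow> complex"
  assumes "g holomorphic_on UNIV"
    and "\<And>u. 0 \<le> Im u \<Longrightarrow> norm (g u) \<le> B"
    and "\<And>x. norm (g (of_real x)) \<le> M"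
    and M: "M > 0" and "0 \<le> Im z"
  shows "norm (g z) \<le> M"
proof (rule le_of_forall_pos_le_mult_exp)
  fix d :: real assume "d > 0"
  then have "norm (g z) \<le> M * (1 + d * norm z)"
    using assms by (intro phragmen_lindelof_half_plane_perturbed)
  also have "\<dots> \<le> M * exp (d * norm z)"
    using M by (intro mult_left_mono) (auto simp: add.commute exp_ge_add_one_self)
  finally show "norm (g z) \<le> M * exp (d * norm z)" .
qed

text \<open>The half-plane version needs an a priori bound; it is obtained quadrant by quadrant, where
  growth of order 1 is still admissible.\<close>
lemma upper_half_plane_bounded_of_axes:
  fixes g :: "complex \<Rightarrow> complex"
  assumes hol: "g holomorphic_on UNIV"
    and growth: "\<And>u. norm (g u) \<le> C * exp (b * norm u)"
    and real_axis: "\<And>x. norm (g (of_real x)) \<le> B"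
    and imag_axis: "\<And>y. y \<ge> 0 \<Longrightarrow> norm (g (\<i> * of_real y)) \<le> B"
    and "B > 0" and z: "0 \<le> Im z"
  shows "norm (g z) \<le> B"
proof (cases "0 \<le> Re z")
  case True
  show ?thesis
    using phragmen_lindelof_quadrant[OF hol growth _ imag_axis \<open>B > 0\<close> True z] real_axis by blast
next
  case False
  have "norm (g (\<i> * (- \<i> * z))) \<le> B"
  proof (rule phragmen_lindelof_quadrant[of "\<lambda>u. g (\<i> * u)" C b])
    show "(\<lambda>u. g (\<i> * u)) holomorphic_on UNIV"
      by (rule holomorphic_on_compose_gen[OF _ hol, unfolded o_def]) (auto intro: holomorphic_intros)
    show "norm (g (\<i> * u)) \<le> C * exp (b * norm u)" for u
      using growth[of "\<i> * u"] by (simp add: norm_mult)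
    show "norm (g (\<i> * of_real x)) \<le> B" if "x \<ge> 0" for x
      using imag_axis[OF that] .
    show "norm (g (\<i> * (\<i> * of_real y))) \<le> B" for y
      using real_axis[of "-y"] by simp
    show "0 \<le> Re (- \<i> * z)" "0 \<le> Im (- \<i> * z)" using False z by auto
  qed fact
  then show ?thesis by simp
qed

lemma phragmen_lindelof_upper_half_plane:
  fixes H :: "complex \<Rightarrow> complex"
  assumes hol: "H holomorphic_on UNIV"
    and growth: "\<And>u. norm (H u) \<le> C * exp (T * norm u)"
    and real_axis: "\<And>x. norm (H (of_real x)) \<le> M"
    and M: "M > 0" and T: "T \<ge> 0" and z: "0 \<le> Im z"
  shows "norm (H z) \<le> M * exp (T * Im z)"
proof -
  define g where "g u = H u * exp (\<i> * of_real T * u)" for u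
  have norm_g: "norm (g u) = norm (H u) * exp (- T * Im u)" for u
    by (simp add: g_def norm_mult)
  have C: "C \<ge> 0" using order_trans[OF norm_ge_zero growth[of 0]] by simp
  have g_hol: "g holomorphic_on UNIV" unfolding g_def by (intro holomorphic_intros hol)
  have g_growth: "norm (g u) \<le> C * exp ((2 * T) * norm u)" for u
  proof -
    have "T * (- Im u) \<le> T * norm u" using T abs_Im_le_cmod[of u] by (intro mult_left_mono) auto
    then have "exp (- T * Im u) \<le> exp (T * norm u)" by simp
    then have "norm (g u) \<le> C * exp (T * norm u) * exp (T * norm u)"
      unfolding norm_g using C by (intro mult_mono growth) auto
    then show ?thesis by (simp add: mult.assoc flip: exp_add)
  qed
  have g_real_axis: "norm (g (of_real x)) \<le> M" for x using real_axis[of x] by (simp add: norm_g)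
  have g_imag_axis: "norm (g (\<i> * of_real y)) \<le> C" if "y \<ge> 0" for y
  proof -
    have "norm (g (\<i> * of_real y)) = norm (H (\<i> * of_real y)) * exp (- T * y)" by (simp add: norm_g)
    also have "\<dots> \<le> C * exp (T * y) * exp (- T * y)"
      using growth[of "\<i> * of_real y"] that by (intro mult_right_mono) (auto simp: norm_mult)
    also have "\<dots> = C" by (simp add: mult.assoc flip: exp_add)
    finally show ?thesis .
  qed
  have "norm (g u) \<le> max M C" if "0 \<le> Im u" for u
    using g_real_axis g_imag_axis M
    by (intro upper_half_plane_bounded_of_axes[OF g_hol g_growth _ _ _ that])
      (auto intro: order_trans[OF _ max.cobounded1] order_trans[OF _ max.cobounded2])
  then have "norm (g z) \<le> M" by (intro phragmen_lindelof_half_plane[OF g_hol _ g_real_axis M z])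
  then have "norm (g z) * exp (T * Im z) \<le> M * exp (T * Im z)" by (intro mult_right_mono) auto
  then show ?thesis by (simp add: norm_g mult.assoc flip: exp_add)
qed

lemma phragmen_lindelof_strip:
  fixes H :: "complex \<Rightarrow> complex"
  assumes hol: "H holomorphic_on UNIV"
    and growth: "\<And>u. norm (H u) \<le> C * exp (T * norm u)"
    and real_axis: "\<And>x. norm (H (of_real x)) \<le> M"
    and "M > 0" "T \<ge> 0"
  shows "norm (H z) \<le> M * exp (T * \<bar>Im z\<bar>)"
proof (cases "0 \<le> Im z")
  case True
  then show ?thesis using phragmen_lindelof_upper_half_plane[OF assms] by simp
next
  case False
  have "norm (H (- (- z))) \<le> M * exp (T * Im (- z))"
  proof (rule phragmen_lindelof_upper_half_plane[of "\<lambda>u. H (- u)" C T M])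
    show "(\<lambda>u. H (- u)) holomorphic_on UNIV"
      by (rule holomorphic_on_compose_gen[OF _ hol, unfolded o_def]) (auto intro: holomorphic_intros)
    show "norm (H (- u)) \<le> C * exp (T * norm u)" for u using growth[of "- u"] by simp
    show "norm (H (- of_real x)) \<le> M" for x using real_axis[of "- x"] by simp
  qed (use assms False in auto)
  then show ?thesis using False by simp
qed

lemma integral_interval_le_lborel:
  fixes f :: "real \<Rightarrow> real"
  assumes int: "integrable lborel f" and nonneg: "\<And>x. 0 \<le> f x"
  shows "f integrable_on {a..b}" "integral {a..b} f \<le> integral\<^sup>L lborel f"
proof -
  have set_int: "set_integrable lborel {a..b} f"
    unfolding set_integrable_def by (rule integrable_mult_indicator) (use int in auto)
  then show "f integrable_on {a..b}" by (rule set_borel_integral_eq_integral(1))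
  have "integral {a..b} f = integral\<^sup>L lborel (\<lambda>x. indicator {a..b} x *\<^sub>R f x)"
    using set_borel_integral_eq_integral(2)[OF set_int] by (simp add: set_lebesgue_integral_def)
  also have "\<dots> \<le> integral\<^sup>L lborel f"
    using set_int int nonneg unfolding set_integrable_def
    by (intro integral_mono) (auto split: split_indicator)
  finally show "integral {a..b} f \<le> integral\<^sup>L lborel f" .
qed

lemma has_integral_of_real_primitive:
  fixes A F :: "complex \<Rightarrow> complex"
  assumes der: "\<And>z. (A has_field_derivative F z) (at z)" and "a \<le> b"
  shows "((\<lambda>t. F (of_real t)) has_integral (A (of_real b) - A (of_real a))) {a..b}"
proof (rule fundamental_theorem_of_calculus[OF \<open>a \<le> b\<close>])
  fix t
  have "((A \<circ> of_real) has_vector_derivative (1 * F (of_real t))) (at t)"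
    by (rule field_vector_diff_chain_at[OF _ der]) (auto intro!: derivative_eq_intros)
  then show "((\<lambda>t. A (of_real t)) has_vector_derivative F (of_real t)) (at t within {a..b})"
    by (auto simp: o_def intro: has_vector_derivative_at_within)
qed

text \<open>AM-GM in the form |u| \<le> (c + |u|^2/c)/2 replaces Cauchy-Schwarz here.\<close>
lemma primitive_difference_real_bound:
  fixes A F :: "complex \<Rightarrow> complex"
  assumes der: "\<And>z. (A has_field_derivative F z) (at z)"
    and int: "integrable lborel (\<lambda>x. (cmod (F (of_real x)))\<^sup>2)"
    and a: "0 \<le> a" and c: "0 < c"
  shows "norm (A (of_real (t + a)) - A (of_real t))
           \<le> (a * c + (\<integral>x. (cmod (F (of_real x)))\<^sup>2 \<partial>lborel) / c) / 2"
proof -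
  define f where "f x = (cmod (F (of_real x)))\<^sup>2" for x
  have f_int: "f integrable_on {t..t+a}" and f_le: "integral {t..t+a} f \<le> integral\<^sup>L lborel f"
    using integral_interval_le_lborel[of f] int unfolding f_def by auto
  have F_int: "((\<lambda>s. F (of_real s)) has_integral (A (of_real (t + a)) - A (of_real t))) {t..t+a}"
    using has_integral_of_real_primitive[OF der, of t "t + a"] a by simp
  have AM_GM: "norm (F (of_real s)) \<le> c/2 + f s / (2*c)" for s
  proof -
    have "0 \<le> (c - norm (F (of_real s)))^2" by simp
    then show ?thesis using c by (simp add: f_def field_simps power2_eq_square)
  qed
  have "norm (A (of_real (t + a)) - A (of_real t)) = norm (integral {t..t+a} (\<lambda>s. F (of_real s)))"
    using F_int by (simp add: integral_unique)
  also have "\<dots> \<le> integral {t..t+a} (\<lambda>s. c/2 + f s / (2*c))"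
    using F_int f_int AM_GM
    by (intro integral_norm_bound_integral) (auto intro!: integrable_add integrable_on_divide)
  also have "\<dots> = a * c / 2 + integral {t..t+a} f / (2*c)"
    using a by (simp add: integral_add[OF integrable_const_ivl integrable_on_divide[OF f_int]])
  also have "\<dots> \<le> a * c / 2 + integral\<^sup>L lborel f / (2*c)"
    using f_le c by (simp add: divide_right_mono)
  finally show ?thesis using c by (simp add: f_def[abs_def] field_simps)
qed

lemma primitive_difference_growth:
  fixes A F :: "complex \<Rightarrow> complex"
  assumes der: "\<And>z. (A has_field_derivative F z) (at z)"
    and growth: "\<And>z. norm (F z) \<le> C * exp (T * norm z)"
    and a: "0 \<le> a" and T: "0 \<le> T"
  shows "norm (A (z + of_real a) - A z) \<le> (a * C * exp (T * a)) * exp (T * norm z)"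
proof -
  have C: "C \<ge> 0" using order_trans[OF norm_ge_zero growth[of 0]] by simp
  have "(F has_contour_integral (A (z + of_real a) - A z)) (linepath z (z + of_real a))"
    using contour_integral_primitive[of UNIV A F "linepath z (z + of_real a)"] der by simp
  then have "norm (A (z + of_real a) - A z) \<le> C * exp (T * (norm z + a)) * norm (z + of_real a - z)"
  proof (rule has_contour_integral_bound_linepath)
    fix w assume "w \<in> closed_segment z (z + of_real a)"
    then have "dist w z \<le> dist z (z + of_real a)" using dist_in_closed_segment by blast
    then have "norm (w - z) \<le> a" using a by (simp add: dist_norm)
    then have "norm w \<le> norm z + a" using norm_triangle_ineq2[of w z] by linarith
    then have "exp (T * norm w) \<le> exp (T * (norm z + a))" using T by (simp add: mult_left_mono)
    then show "norm (F w) \<le> C * exp (T * (norm z + a))"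
      using growth[of w] C by (meson mult_left_mono order_trans)
  qed (use C in simp)
  also have "\<dots> = (a * C * exp (T * a)) * exp (T * norm z)"
    using a by (simp add: distrib_left exp_add)
  finally show ?thesis .
qed

text \<open>A weak Bernstein inequality: the Phragmen-Lindelof bound on the strip |Im z| \<le> 1 feeds
  Cauchy's estimate on the unit circle.\<close>
lemma deriv_real_axis_bound:
  fixes H :: "complex \<Rightarrow> complex"
  assumes hol: "H holomorphic_on UNIV"
    and growth: "\<And>z. norm (H z) \<le> C * exp (T * norm z)"
    and real_axis: "\<And>x. norm (H (of_real x)) \<le> M"
    and M: "M > 0" and T: "T \<ge> 0"
  shows "norm (deriv H (of_real x)) \<le> M * exp T"
proof -
  have "norm ((deriv ^^ 1) H (of_real x)) \<le> fact 1 * (M * exp T) / 1 ^ 1"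
  proof (rule Cauchy_inequality)
    show "H holomorphic_on ball (of_real x) 1" using hol by (rule holomorphic_on_subset) auto
    show "continuous_on (cball (of_real x) 1) H"
      using holomorphic_on_imp_continuous_on[OF hol] by (rule continuous_on_subset) auto
    fix w :: complex assume w: "norm (of_real x - w) = 1"
    have "\<bar>Im w\<bar> = \<bar>Im (of_real x - w)\<bar>" by simp
    also have "\<dots> \<le> 1" using abs_Im_le_cmod[of "of_real x - w"] w by simp
    finally have "exp (T * \<bar>Im w\<bar>) \<le> exp T" using T by (simp add: mult_left_le)
    then show "norm (H w) \<le> M * exp T"
      using phragmen_lindelof_strip[OF hol growth real_axis M T, of w] M
      by (meson mult_left_mono less_imp_le order_trans)
  qed simp
  then show ?thesis by simp
qed

lemma exp_type_real_shift_bound: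
  fixes F :: "complex \<Rightarrow> complex"
  assumes hol: "F holomorphic_on UNIV"
    and growth: "\<And>z. norm (F z) \<le> C * exp (T * norm z)"
    and int: "integrable lborel (\<lambda>x. (cmod (F (of_real x)))\<^sup>2)"
    and a: "0 \<le> a" and c: "0 < c" and T: "0 \<le> T"
  shows "norm (F (of_real (x + a)) - F (of_real x))
           \<le> (a * c + (\<integral>x. (cmod (F (of_real x)))\<^sup>2 \<partial>lborel) / c) / 2 * exp T"
    (is "_ \<le> ?M * exp T")
proof -
  have N: "0 \<le> (\<integral>x. (cmod (F (of_real x)))\<^sup>2 \<partial>lborel)" by simp
  show ?thesis
  proof (cases "a = 0")
    case True then show ?thesis using c N by simp
  next
    case False
    then have M: "0 < ?M" using a c N by (simp add: add_pos_nonneg)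
    obtain A where "\<And>z. z \<in> UNIV \<Longrightarrow> (A has_field_derivative F z) (at z within UNIV)"
      using holomorphic_convex_primitive'[OF convex_UNIV open_UNIV hol] by blast
    then have der: "(A has_field_derivative F z) (at z)" for z by simp
    define H where "H z = A (z + of_real a) - A z" for z
    have H_der: "(H has_field_derivative (F (z + of_real a) - F z)) (at z)" for z
      unfolding H_def by (auto intro!: derivative_eq_intros der DERIV_chain2[OF der])
    then have "H holomorphic_on UNIV" by (auto simp: holomorphic_on_def field_differentiable_def)
    then have "norm (deriv H (of_real x)) \<le> ?M * exp T"
    proof (rule deriv_real_axis_bound[OF _ _ _ M T])
      show "norm (H z) \<le> (a * C * exp (T * a)) * exp (T * norm z)" for z
        unfolding H_def using primitive_difference_growth[OF der growth a T] .
      show "norm (H (of_real t)) \<le> ?M" for t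
        unfolding H_def using primitive_difference_real_bound[OF der int a c, of t] by simp
    qed
    then show ?thesis using DERIV_imp_deriv[OF H_der] by simp
  qed
qed

lemma sq_norm_le_integral_plus_oscillation:
  fixes u :: "real \<Rightarrow> 'a::real_normed_vector"
  assumes int: "integrable lborel (\<lambda>t. (norm (u t))\<^sup>2)" and L: "0 < L"
    and osc: "\<And>t. t \<in> {x..x+L} \<Longrightarrow> norm (u t - u x) \<le> D"
  shows "L * (norm (u x))\<^sup>2 \<le> 2 * (\<integral>t. (norm (u t))\<^sup>2 \<partial>lborel) + 2 * L * D\<^sup>2"
proof -
  define f where "f t = (norm (u t))\<^sup>2" for t
  have f_int: "f integrable_on {x..x+L}" and f_le: "integral {x..x+L} f \<le> integral\<^sup>L lborel f"
    using integral_interval_le_lborel[of f] int unfolding f_def by auto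
  have "0 \<le> D" using osc[of x] L by simp
  have pointwise: "f x \<le> 2 * f t + 2 * D\<^sup>2" if "t \<in> {x..x+L}" for t
  proof -
    have "norm (u x) \<le> norm (u t) + D"
      using osc[OF that] norm_triangle_ineq2[of "u x" "u t"] by (simp add: norm_minus_commute)
    then have "(norm (u x))\<^sup>2 \<le> (norm (u t) + D)\<^sup>2" by (intro power_mono) auto
    also have "\<dots> \<le> 2 * (norm (u t))\<^sup>2 + 2 * D\<^sup>2"
      using sum_squares_ge_zero[of "norm (u t) - D" 0] by (simp add: power2_eq_square algebra_simps)
    finally show ?thesis by (simp add: f_def)
  qed
  have "L * f x = integral {x..x+L} (\<lambda>t. f x)" using L by simp
  also have "\<dots> \<le> integral {x..x+L} (\<lambda>t. 2 * f t + 2 * D\<^sup>2)"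
    using pointwise f_int by (intro integral_le) (auto intro!: integrable_add integrable_on_mult_right)
  also have "\<dots> = 2 * integral {x..x+L} f + 2 * L * D\<^sup>2"
    using L by (simp add: integral_add[OF integrable_on_mult_right[OF f_int] integrable_const_ivl])
  also have "\<dots> \<le> 2 * integral\<^sup>L lborel f + 2 * L * D\<^sup>2" using f_le by simp
  finally show ?thesis by (simp add: f_def[abs_def])
qed

lemma le_of_forall_pos_le_AM_GM:
  fixes y N E :: real
  assumes N: "0 \<le> N" and bound: "\<And>c. 0 < c \<Longrightarrow> y \<le> N + 2 * ((2 * c + N / c) / 2 * E)\<^sup>2"
  shows "y \<le> (1 + 4 * E\<^sup>2) * N"
proof (cases "N = 0")
  case True
  have "((\<lambda>c. 2 * (c * E)\<^sup>2) \<longlongrightarrow> 2 * (0 * E)\<^sup>2) (at_right 0)" by (intro tendsto_intros)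
  moreover have "eventually (\<lambda>c. y \<le> 2 * (c * E)\<^sup>2) (at_right (0::real))"
    using eventually_at_right_less[of "0::real"] by (rule eventually_mono) (use bound True in auto)
  ultimately show ?thesis using True by (simp add: tendsto_lowerbound)
next
  case False
  define c where "c = sqrt (N / 2)"
  have "0 < c" using N False by (simp add: c_def)
  moreover have "2 * c + N / c = 4 * c" using \<open>0 < c\<close> N by (simp add: c_def field_simps)
  ultimately have "y \<le> N + 2 * (2 * c * E)\<^sup>2" using bound by fastforce
  also have "\<dots> = (1 + 4 * E\<^sup>2) * N" using N by (simp add: c_def power_mult_distrib algebra_simps)
  finally show ?thesis .
qed

lemma exp_type_sq_norm_le_integral:
  fixes F :: "complex \<Rightarrow> complex"
  assumes hol: "F holomorphic_on UNIV" and type: "exp_type_le F \<tau>" and \<tau>: "0 \<le> \<tau>"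
    and int: "integrable lborel (\<lambda>x. (cmod (F (of_real x)))\<^sup>2)"
  shows "(cmod (F (of_real x)))\<^sup>2
           \<le> (1 + 4 * (exp (\<tau> + 1))\<^sup>2) * (\<integral>x. (cmod (F (of_real x)))\<^sup>2 \<partial>lborel)"
proof -
  define N where "N = (\<integral>x. (cmod (F (of_real x)))\<^sup>2 \<partial>lborel)"
  obtain C where growth: "\<And>z. norm (F z) \<le> C * exp ((\<tau> + 1) * norm z)"
    using type unfolding exp_type_le_def by (metis zero_less_one)
  show ?thesis
    unfolding N_def[symmetric]
  proof (rule le_of_forall_pos_le_AM_GM)
    show "0 \<le> N" unfolding N_def by simp
    fix c :: real assume c: "0 < c"
    define D where "D = (2 * c + N / c) / 2 * exp (\<tau> + 1)"
    have "norm (F (of_real t) - F (of_real x)) \<le> D" if t: "t \<in> {x..x+2}" for t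
    proof -
      have "norm (F (of_real (x + (t - x))) - F (of_real x)) \<le> ((t - x) * c + N / c) / 2 * exp (\<tau> + 1)"
        unfolding N_def using t \<tau> by (intro exp_type_real_shift_bound[OF hol growth int _ c]) auto
      also have "\<dots> \<le> D"
        using t c unfolding D_def by (intro mult_right_mono divide_right_mono add_right_mono) auto
      finally show ?thesis by simp
    qed
    then have "2 * (cmod (F (of_real x)))\<^sup>2 \<le> 2 * N + 2 * 2 * D\<^sup>2"
      unfolding N_def using int by (intro sq_norm_le_integral_plus_oscillation) auto
    then show "(cmod (F (of_real x)))\<^sup>2 \<le> N + 2 * ((2 * c + N / c) / 2 * exp (\<tau> + 1))\<^sup>2"
      unfolding D_def by simp
  qed
qed

lemma sinc2_minus [simp]: "sinc2 (- x) = sinc2 x"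
  by (simp add: sinc2_def)

lemma abs_sinc2_le_1: "\<bar>sinc2 x\<bar> \<le> 1"
proof (cases "x = 0")
  case False
  have "\<bar>sin (2*pi*x)\<bar> \<le> \<bar>2*pi*x\<bar>" by (rule abs_sin_x_le_abs_x)
  then show ?thesis using False by (simp add: sinc2_def abs_divide divide_le_eq_1)
qed (simp add: sinc2_def)

lemma abs_sinc2_le_half:
  assumes "1/2 \<le> \<bar>x\<bar>"
  shows "\<bar>sinc2 x\<bar> \<le> 1/2"
proof -
  have "pi * (1/2) \<le> pi * \<bar>x\<bar>" using assms by (intro mult_left_mono) auto
  moreover have "\<bar>2*pi*x\<bar> = 2 * (pi * \<bar>x\<bar>)" by (simp add: abs_mult)
  ultimately have "2 \<le> \<bar>2*pi*x\<bar>" using pi_gt3 by linarith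
  have "\<bar>sin (2*pi*x)\<bar> / \<bar>2*pi*x\<bar> \<le> 1 / \<bar>2*pi*x\<bar>"
    using abs_sin_le_one[of "2*pi*x"] by (intro divide_right_mono) auto
  also have "\<dots> \<le> 1 / 2" using \<open>2 \<le> \<bar>2*pi*x\<bar>\<close> by (intro divide_left_mono) auto
  finally show ?thesis using assms by (auto simp: sinc2_def abs_divide)
qed

lemma sinc2_le_cos:
  assumes "\<bar>x\<bar> \<le> 1/2"
  shows "sinc2 x \<le> cos (pi * x)"
proof -
  have pos: "sinc2 y \<le> cos (pi * y)" if y: "0 < y" "y \<le> 1/2" for y
  proof -
    have "0 \<le> pi * y" "pi * y \<le> pi / 2" using y by auto
    then have cos_nonneg: "0 \<le> cos (pi * y)" by (intro cos_ge_zero) linarith+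
    have "sinc2 y = 2 * sin (pi * y) * cos (pi * y) / (2 * (pi * y))"
      using y sin_double[of "pi * y"] by (simp add: sinc2_def mult.assoc)
    also have "\<dots> \<le> 2 * (pi * y) * cos (pi * y) / (2 * (pi * y))"
      using y cos_nonneg sin_x_le_x[of "pi * y"] by (intro divide_right_mono mult_right_mono) auto
    also have "\<dots> = cos (pi * y)" using y by simp
    finally show ?thesis .
  qed
  show ?thesis
  proof (cases x "0::real" rule: linorder_cases)
    case less then show ?thesis using pos[of "- x"] assms by simp
  next
    case equal then show ?thesis by (simp add: sinc2_def)
  next
    case greater then show ?thesis using pos[of x] assms by simp
  qed
qed

lemma sinc2_ge_neg_half: "- 1/2 \<le> sinc2 x"
proof (cases "\<bar>x\<bar> \<le> 1/2")
  case True
  have "0 \<le> sinc2 \<bar>x\<bar>"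
  proof (cases "x = 0")
    case False
    have "0 \<le> sin (2*pi*\<bar>x\<bar>)" using True by (intro sin_ge_zero) auto
    then show ?thesis by (simp add: sinc2_def)
  qed (simp add: sinc2_def)
  then show ?thesis by (cases "0 \<le> x") auto
next
  case False
  then show ?thesis using abs_sinc2_le_half[of x] by linarith
qed

lemma Wac_nonneg: "0 \<le> Wac G x"
  using abs_sinc2_le_1[of x] sinc2_ge_neg_half[of x] by (cases G) auto

lemma Wac_le_2: "Wac G x \<le> 2"
  using abs_sinc2_le_1[of x] by (cases G) auto

lemma Wac_bounded_below_away_from_0:
  assumes "0 < e"
  obtains c where "0 < c" "\<And>G x. e \<le> \<bar>x\<bar> \<Longrightarrow> c \<le> Wac G x"
proof
  define e' where "e' = min e (1/2)"
  show "0 < min (1/2) (1 - cos (pi * e'))"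
    using assms cos_monotone_0_pi[of 0 "pi * e'"] by (simp add: e'_def)
  have small: "1 - cos (pi * e') \<le> 1 - sinc2 x" if x: "e' \<le> \<bar>x\<bar>" "\<bar>x\<bar> \<le> 1/2" for x
  proof -
    have "cos (pi * \<bar>x\<bar>) \<le> cos (pi * e')"
      using x assms by (intro cos_monotone_0_pi_le) (auto simp: e'_def)
    then show ?thesis using sinc2_le_cos[of x] x by (cases "0 \<le> x") auto
  qed
  have large: "1/2 \<le> 1 - sinc2 x" if "1/2 \<le> \<bar>x\<bar>" for x using abs_sinc2_le_half[OF that] by linarith
  have "min (1/2) (1 - cos (pi * e')) \<le> 1 - sinc2 x" if "e \<le> \<bar>x\<bar>" for x
  proof (cases "\<bar>x\<bar> \<le> 1/2")
    case True
    then have "e' \<le> \<bar>x\<bar>" using that by (simp add: e'_def)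
    then show ?thesis using small[OF _ True] by linarith
  next
    case False
    then show ?thesis using large[of x] by linarith
  qed
  then show "min (1/2) (1 - cos (pi * e')) \<le> Wac G x" if "e \<le> \<bar>x\<bar>" for G x
    using that sinc2_ge_neg_half[of x] by (cases G) auto
qed

lemma sinc2_measurable [measurable]: "sinc2 \<in> borel_measurable borel"
  unfolding sinc2_def[abs_def] by measurable

lemma Wac_measurable [measurable]: "(\<lambda>x. Wac G x) \<in> borel_measurable borel"
  by (cases G; simp; measurable)

lemma Wdelta_bounds: "0 \<le> Wdelta G" "Wdelta G \<le> 1"
  by (cases G; simp)+

lemma continuous_on_sq_norm_of_real:
  fixes F :: "complex \<Rightarrow> complex"
  assumes "F holomorphic_on UNIV"
  shows "continuous_on S (\<lambda>x::real. (cmod (F (of_real x)))\<^sup>2)"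
proof -
  have "continuous_on S (\<lambda>x::real. F (of_real x))"
    by (rule continuous_on_compose2[OF holomorphic_on_imp_continuous_on[OF assms]])
      (auto intro: continuous_intros)
  then show ?thesis by (intro continuous_intros)
qed

lemma integrable_weighted_sq_norm:
  fixes F :: "complex \<Rightarrow> complex"
  assumes hol: "F holomorphic_on UNIV" and int: "integrable lborel (\<lambda>x. (cmod (F (of_real x)))\<^sup>2)"
  shows "integrable lborel (\<lambda>x. (cmod (F (of_real x)))\<^sup>2 * Wac G x)"
proof (rule Bochner_Integration.integrable_bound[OF integrable_mult_right[OF int, of 2]])
  show "(\<lambda>x. (cmod (F (of_real x)))\<^sup>2 * Wac G x) \<in> borel_measurable lborel"
    using borel_measurable_continuous_onI[OF continuous_on_sq_norm_of_real[OF hol]] by measurable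
  show "AE x in lborel. norm ((cmod (F (of_real x)))\<^sup>2 * Wac G x) \<le> norm (2 * (cmod (F (of_real x)))\<^sup>2)"
  proof (intro AE_I2)
    fix x
    have "(cmod (F (of_real x)))\<^sup>2 * Wac G x \<le> (cmod (F (of_real x)))\<^sup>2 * 2"
      by (intro mult_left_mono Wac_le_2) simp
    then show "norm ((cmod (F (of_real x)))\<^sup>2 * Wac G x) \<le> norm (2 * (cmod (F (of_real x)))\<^sup>2)"
      using Wac_nonneg[of G x] by (simp add: mult.commute)
  qed
qed

lemma integrable_sq_norm_of_weighted:
  fixes F :: "complex \<Rightarrow> complex"
  assumes hol: "F holomorphic_on UNIV"
    and weighted_int: "integrable lborel (\<lambda>x. (cmod (F (of_real x)))\<^sup>2 * Wac G x)"
  shows "integrable lborel (\<lambda>x. (cmod (F (of_real x)))\<^sup>2)"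
proof -
  define f where "f x = (cmod (F (of_real x)))\<^sup>2" for x :: real
  obtain c where c: "0 < c" "\<And>x. 1 \<le> \<bar>x\<bar> \<Longrightarrow> c \<le> Wac G x"
    using Wac_bounded_below_away_from_0[of 1] by (metis zero_less_one)
  obtain B where B: "\<And>x. x \<in> {-1..1} \<Longrightarrow> f x \<le> B"
    using continuous_attains_sup[of "{-1..1::real}" f] continuous_on_sq_norm_of_real[OF hol]
    unfolding f_def by fastforce
  have "integrable lborel (\<lambda>x. f x * Wac G x / c + B * indicator {-1..1::real} x)"
    using weighted_int unfolding f_def
    by (intro Bochner_Integration.integrable_add integrable_divide integrable_mult_right) auto
  moreover have "f \<in> borel_measurable lborel"
    using borel_measurable_continuous_onI[OF continuous_on_sq_norm_of_real[OF hol]]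
    unfolding f_def[abs_def] by simp
  moreover have "norm (f x) \<le> norm (f x * Wac G x / c + B * indicator {-1..1::real} x)" for x
  proof -
    have "f x \<le> f x * Wac G x / c + B * indicator {-1..1::real} x"
    proof (cases "x \<in> {-1..1}")
      case True
      have "0 \<le> f x * Wac G x / c" using c Wac_nonneg[of G x] by (simp add: f_def)
      then show ?thesis using B[OF True] True by simp
    next
      case False
      then have "f x * c \<le> f x * Wac G x" using c(2)[of x] by (auto simp: f_def intro!: mult_left_mono)
      then show ?thesis using False c by (simp add: field_simps)
    qed
    then show ?thesis by (simp add: f_def)
  qed
  ultimately have "integrable lborel f" by (rule Bochner_Integration.integrable_bound[OF _ _ AE_I2])
  then show ?thesis by (simp add: f_def[abs_def])
qed

lemma integrable_sq_norm_iff_weighted: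
  fixes F :: "complex \<Rightarrow> complex"
  assumes hol: "F holomorphic_on UNIV"
  shows "integrable lborel (\<lambda>x. (cmod (F (of_real x)))\<^sup>2) \<longleftrightarrow>
         (\<integral>\<^sup>+ x. ennreal ((cmod (F (of_real x)))\<^sup>2 * Wac G x) \<partial>lborel) < \<infinity>"
proof -
  have "(\<lambda>x. (cmod (F (of_real x)))\<^sup>2 * Wac G x) \<in> borel_measurable lborel"
    using borel_measurable_continuous_onI[OF continuous_on_sq_norm_of_real[OF hol]] by measurable
  then have "integrable lborel (\<lambda>x. (cmod (F (of_real x)))\<^sup>2 * Wac G x) \<longleftrightarrow>
      (\<integral>\<^sup>+ x. ennreal ((cmod (F (of_real x)))\<^sup>2 * Wac G x) \<partial>lborel) < \<infinity>"
    using Wac_nonneg[of G] by (simp add: integrable_iff_bounded)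
  then show ?thesis
    using integrable_weighted_sq_norm[OF hol] integrable_sq_norm_of_weighted[OF hol] by blast
qed

lemma PW_iff_PWG: "F holomorphic_on UNIV \<Longrightarrow> F \<in> PW \<tau> \<longleftrightarrow> F \<in> PWG G \<tau>"
  using integrable_sq_norm_iff_weighted unfolding PW_def PWG_def by blast

lemma integral_mult_weight_lower_bound:
  fixes f w :: "real \<Rightarrow> real"
  assumes f_int: "integrable lborel f" and fw_int: "integrable lborel (\<lambda>x. f x * w x)"
    and f_nonneg: "\<And>x. 0 \<le> f x" and w_nonneg: "\<And>x. 0 \<le> w x"
    and f_bound: "\<And>x. f x \<le> K * integral\<^sup>L lborel f"
    and e: "0 \<le> e" and c: "0 \<le> c" and w_bound: "\<And>x. e \<le> \<bar>x\<bar> \<Longrightarrow> c \<le> w x"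
  shows "c * (1 - 2 * e * K) * integral\<^sup>L lborel f \<le> integral\<^sup>L lborel (\<lambda>x. f x * w x)"
proof -
  define N where "N = integral\<^sup>L lborel f"
  define r where "r x = c * f x - c * K * N * indicator {-e..e} x" for x
  have "integral\<^sup>L lborel r \<le> integral\<^sup>L lborel (\<lambda>x. f x * w x)"
  proof (rule integral_mono[OF _ fw_int])
    show "integrable lborel r"
      unfolding r_def using f_int e
      by (intro Bochner_Integration.integrable_diff integrable_mult_right integrable_real_indicator) auto
    fix x
    show "r x \<le> f x * w x"
    proof (cases "x \<in> {-e..e}")
      case True
      have "c * f x \<le> c * (K * N)" using f_bound[of x] c by (intro mult_left_mono) (auto simp: N_def)
      moreover have "0 \<le> f x * w x" using f_nonneg[of x] w_nonneg[of x] by simp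
      ultimately show ?thesis using True by (simp add: r_def mult.assoc)
    next
      case False
      then have "c * f x \<le> w x * f x" using w_bound[of x] f_nonneg[of x] by (intro mult_right_mono) auto
      then show ?thesis using False by (simp add: r_def mult.commute)
    qed
  qed
  moreover have "integral\<^sup>L lborel r = c * (1 - 2 * e * K) * N"
    unfolding r_def using f_int e by (simp add: N_def algebra_simps)
  ultimately show ?thesis by (simp add: N_def)
qed

lemma WL2norm_le_L2norm:
  assumes F: "F \<in> PW \<tau>" and \<tau>: "0 \<le> \<tau>"
  shows "WL2norm G F \<le> sqrt (3 + 4 * (exp (\<tau> + 1))\<^sup>2) * L2norm F"
proof -
  have hol: "F holomorphic_on UNIV" and type: "exp_type_le F \<tau>"
    and int: "integrable lborel (\<lambda>x. (cmod (F (of_real x)))\<^sup>2)"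
    using F unfolding PW_def by auto
  define N where "N = (\<integral>x. (cmod (F (of_real x)))\<^sup>2 \<partial>lborel)"
  have "(cmod (F (of_real x)))\<^sup>2 * Wac G x \<le> 2 * (cmod (F (of_real x)))\<^sup>2" for x
    using mult_left_mono[OF Wac_le_2[of G x], of "(cmod (F (of_real x)))\<^sup>2"] by (simp add: mult.commute)
  then have "(\<integral>x. (cmod (F (of_real x)))\<^sup>2 * Wac G x \<partial>lborel)
      \<le> (\<integral>x. 2 * (cmod (F (of_real x)))\<^sup>2 \<partial>lborel)"
    by (intro integral_mono integrable_weighted_sq_norm[OF hol int] integrable_mult_right[OF int])
  also have "\<dots> = 2 * N" by (simp add: N_def)
  finally have continuous_part: "(\<integral>x. (cmod (F (of_real x)))\<^sup>2 * Wac G x \<partial>lborel) \<le> 2 * N" .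
  have "Wdelta G * (cmod (F 0))\<^sup>2 \<le> (cmod (F 0))\<^sup>2"
    using Wdelta_bounds[of G] by (intro mult_left_le_one_le) auto
  also have "\<dots> \<le> (1 + 4 * (exp (\<tau> + 1))\<^sup>2) * N"
    using exp_type_sq_norm_le_integral[OF hol type \<tau> int, of 0] by (simp add: N_def)
  finally have "WL2norm G F \<le> sqrt ((3 + 4 * (exp (\<tau> + 1))\<^sup>2) * N)"
    using continuous_part unfolding WL2norm_def by (simp add: algebra_simps)
  then show ?thesis by (simp add: L2norm_def N_def real_sqrt_mult)
qed

lemma L2norm_le_WL2norm:
  assumes \<tau>: "0 \<le> \<tau>"
  obtains Cm where "0 < Cm" "\<And>F. F \<in> PW \<tau> \<Longrightarrow> Cm * L2norm F \<le> WL2norm G F"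
proof -
  define K where "K = 1 + 4 * (exp (\<tau> + 1))\<^sup>2"
  define e where "e = 1 / (4 * K)"
  have K: "1 \<le> K" unfolding K_def by simp
  then have e: "0 < e" unfolding e_def by simp
  obtain c where c: "0 < c" "\<And>G x. e \<le> \<bar>x\<bar> \<Longrightarrow> c \<le> Wac G x"
    using Wac_bounded_below_away_from_0[OF e] by blast
  have "sqrt (c / 2) * L2norm F \<le> WL2norm G F" if F: "F \<in> PW \<tau>" for F
  proof -
    have hol: "F holomorphic_on UNIV" and type: "exp_type_le F \<tau>"
      and int: "integrable lborel (\<lambda>x. (cmod (F (of_real x)))\<^sup>2)"
      using F unfolding PW_def by auto
    have "c * (1 - 2 * e * K) * (\<integral>x. (cmod (F (of_real x)))\<^sup>2 \<partial>lborel)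
            \<le> (\<integral>x. (cmod (F (of_real x)))\<^sup>2 * Wac G x \<partial>lborel)"
    proof (rule integral_mult_weight_lower_bound[OF int integrable_weighted_sq_norm[OF hol int]])
      show "(cmod (F (of_real x)))\<^sup>2 \<le> K * (\<integral>x. (cmod (F (of_real x)))\<^sup>2 \<partial>lborel)" for x
        unfolding K_def by (rule exp_type_sq_norm_le_integral[OF hol type \<tau> int])
    qed (use e c Wac_nonneg in auto)
    moreover have "c * (1 - 2 * e * K) = c / 2" using K by (simp add: e_def field_simps)
    moreover have "0 \<le> Wdelta G * (cmod (F 0))\<^sup>2" using Wdelta_bounds[of G] by simp
    ultimately show ?thesis unfolding L2norm_def WL2norm_def by (simp flip: real_sqrt_mult)
  qed
  then show ?thesis using that[of "sqrt (c / 2)"] c by simp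
qed

theorem proposition12:
  fixes G :: symgroup and \<Delta> :: real
  assumes "\<Delta> > 0"
  shows "(\<forall>F. F holomorphic_on UNIV \<longrightarrow> (F \<in> PW (pi * \<Delta>) \<longleftrightarrow> F \<in> PWG G (pi * \<Delta>)))
       \<and> (\<exists>Cp Cm. Cp > 0 \<and> Cm > 0 \<and>
            (\<forall>F \<in> PW (pi * \<Delta>). Cm * L2norm F \<le> WL2norm G F \<and> WL2norm G F \<le> Cp * L2norm F))"
proof
  show "\<forall>F. F holomorphic_on UNIV \<longrightarrow> (F \<in> PW (pi * \<Delta>) \<longleftrightarrow> F \<in> PWG G (pi * \<Delta>))"
    using PW_iff_PWG by blast
  have \<tau>: "0 \<le> pi * \<Delta>" using assms by simp
  obtain Cm where "0 < Cm" "\<And>F. F \<in> PW (pi * \<Delta>) \<Longrightarrow> Cm * L2norm F \<le> WL2norm G F"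
    using L2norm_le_WL2norm[OF \<tau>] by blast
  moreover define Cp where "Cp = sqrt (3 + 4 * (exp (pi * \<Delta> + 1))\<^sup>2)"
  moreover have "0 < Cp" unfolding Cp_def by (simp add: add_pos_nonneg)
  moreover have "\<And>F. F \<in> PW (pi * \<Delta>) \<Longrightarrow> WL2norm G F \<le> Cp * L2norm F"
    unfolding Cp_def using WL2norm_le_L2norm[OF _ \<tau>] .
  ultimately show "\<exists>Cp Cm. Cp > 0 \<and> Cm > 0 \<and>
            (\<forall>F \<in> PW (pi * \<Delta>). Cm * L2norm F \<le> WL2norm G F \<and> WL2norm G F \<le> Cp * L2norm F)"
    by blast
qed

end
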